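(* Let $G$ be a finitely generated infinite discrete group with infinite commutator width, $\mathrm{cl}(G)=\infty$. For $K\in\mathbb{Z}_{\ge0}$ let $W_K\subseteq[G,G]$ be the set of elements of $G$ that can be written as a product of at most $K$ commutators. Then for every $K\in\mathbb{Z}_{\ge 0}$ there is no finite subset $F\subseteq G$ such that $G=\bigcup_{t\in F} t\,W_K$; that is, any set $T_K\subseteq G$ with $G=\bigcup_{t\in T_K}tW_K$ must be infinite.
   Context: $[a,b]=aba^{-1}b^{-1}$. For $x\in[G,G]$, $\mathrm{cl}_G(x)$ is the least number of commutators whose product is $x$; the commutator width is $\mathrm{cl}(G)=\sup_{x\in[G,G]}\mathrm{cl}_G(x)\in\mathbb{Z}_{\ge0}\cup\{\infty\}$. *)

theory Defs
  imports "HOL-Algebra.Algebra"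
begin

definition comm_prod_le :: "('a, 'b) monoid_scheme \<Rightarrow> nat \<Rightarrow> 'a set" where
  "comm_prod_le G K = {x. \<exists>cs. length cs \<le> K \<and> set cs \<subseteq> derived_set G (carrier G)
      \<and> x = foldr (\<lambda>c y. c \<otimes>\<^bsub>G\<^esub> y) cs \<one>\<^bsub>G\<^esub>}"

definition finitely_generated_group :: "('a, 'b) monoid_scheme \<Rightarrow> bool" where
  "finitely_generated_group G \<longleftrightarrow>
     (\<exists>S. finite S \<and> S \<subseteq> carrier G \<and> generate G S = carrier G)"

definition infinite_commutator_width :: "('a, 'b) monoid_scheme \<Rightarrow> bool" where
  "infinite_commutator_width G \<longleftrightarrow>
     (\<forall>K. \<not> derived G (carrier G) \<subseteq> comm_prod_le G K)"

end

theory Submission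
  imports Defs
begin

text \<open>The sets \<open>W\<^sub>n\<close> of products of at most \<open>n\<close> commutators increase and exhaust \<open>[G,G]\<close>,
  and \<open>W\<^sub>m W\<^sub>n \<subseteq> W\<^sub>m\<^sub>+\<^sub>n\<close>. If finitely many translates \<open>t W\<^sub>K\<close> covered \<open>G\<close>, then writing
  \<open>x \<in> [G,G]\<close> as \<open>t w\<close> with \<open>w \<in> W\<^sub>K\<close> forces \<open>t \<in> [G,G]\<close>; the finitely many such \<open>t\<close> lie in a
  common \<open>W\<^sub>N\<close>, so every commutator-subgroup element is a product of at most \<open>N + K\<close>
  commutators, contradicting infinite commutator width.\<close>

lemma (in monoid) foldr_mult_closed:
  "set cs \<subseteq> carrier G \<Longrightarrow> foldr (\<lambda>c y. c \<otimes> y) cs \<one> \<in> carrier G"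
  by (induction cs) auto

lemma (in monoid) foldr_mult_append:
  assumes "set cs \<subseteq> carrier G" "set ds \<subseteq> carrier G"
  shows "foldr (\<lambda>c y. c \<otimes> y) (cs @ ds) \<one>
       = foldr (\<lambda>c y. c \<otimes> y) cs \<one> \<otimes> foldr (\<lambda>c y. c \<otimes> y) ds \<one>"
  using assms by (induction cs) (simp_all add: foldr_mult_closed m_assoc)

context group
begin

lemma comm_prod_le_mono:
  assumes "m \<le> n" shows "comm_prod_le G m \<subseteq> comm_prod_le G n"
  using assms unfolding comm_prod_le_def by force

lemma one_in_comm_prod_le: "\<one> \<in> comm_prod_le G n"
  unfolding comm_prod_le_def by (intro CollectI exI[of _ "[]"]) simp

lemma derived_set_in_comm_prod_le:
  assumes "h \<in> derived_set G (carrier G)" shows "h \<in> comm_prod_le G 1"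
proof -
  have "h \<in> carrier G" using assms derived_set_in_carrier by blast
  then show ?thesis
    unfolding comm_prod_le_def using assms by (intro CollectI exI[of _ "[h]"]) simp
qed

lemma comm_prod_le_mult:
  assumes "x \<in> comm_prod_le G m" "y \<in> comm_prod_le G n"
  shows "x \<otimes> y \<in> comm_prod_le G (m + n)"
proof -
  obtain cs where cs: "length cs \<le> m" "set cs \<subseteq> derived_set G (carrier G)"
    "x = foldr (\<lambda>c y. c \<otimes> y) cs \<one>"
    using assms(1) unfolding comm_prod_le_def by blast
  obtain ds where ds: "length ds \<le> n" "set ds \<subseteq> derived_set G (carrier G)"
    "y = foldr (\<lambda>c y. c \<otimes> y) ds \<one>"
    using assms(2) unfolding comm_prod_le_def by blast
  have "set cs \<subseteq> carrier G" "set ds \<subseteq> carrier G"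
    using cs(2) ds(2) derived_set_in_carrier by blast+
  then have "x \<otimes> y = foldr (\<lambda>c y. c \<otimes> y) (cs @ ds) \<one>"
    unfolding cs(3) ds(3) by (rule foldr_mult_append[symmetric])
  then show ?thesis
    unfolding comm_prod_le_def using cs(1,2) ds(1,2) by (intro CollectI exI[of _ "cs @ ds"]) simp
qed

lemma derived_set_inv_closed:
  assumes "h \<in> derived_set G (carrier G)" shows "inv h \<in> derived_set G (carrier G)"
proof -
  obtain a b where ab: "a \<in> carrier G" "b \<in> carrier G" "h = a \<otimes> b \<otimes> inv a \<otimes> inv b"
    using assms by blast
  then have "inv h = b \<otimes> a \<otimes> inv b \<otimes> inv a"
    by (simp add: inv_mult_group m_assoc)
  then show ?thesis using ab by blast
qed

lemma derived_eq_UN_comm_prod_le: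
  "derived G (carrier G) = (\<Union>n. comm_prod_le G n)"
proof
  show "derived G (carrier G) \<subseteq> (\<Union>n. comm_prod_le G n)"
  proof
    fix x assume "x \<in> derived G (carrier G)"
    then have "x \<in> generate G (derived_set G (carrier G))" unfolding derived_def .
    then show "x \<in> (\<Union>n. comm_prod_le G n)"
    proof (induction rule: generate.induct)
      case one
      show ?case using one_in_comm_prod_le by (rule UN_I[OF UNIV_I])
    next
      case (incl h)
      then show ?case using derived_set_in_comm_prod_le by (intro UN_I[OF UNIV_I])
    next
      case (inv h)
      then show ?case
        using derived_set_in_comm_prod_le[OF derived_set_inv_closed] by (intro UN_I[OF UNIV_I])
    next
      case (eng h1 h2)
      then obtain m n where "h1 \<in> comm_prod_le G m" "h2 \<in> comm_prod_le G n" by blast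
      then show ?case using comm_prod_le_mult by (intro UN_I[OF UNIV_I])
    qed
  qed
next
  have "foldr (\<lambda>c y. c \<otimes> y) cs \<one> \<in> derived G (carrier G)"
    if "set cs \<subseteq> derived_set G (carrier G)" for cs
    using that
  proof (induction cs)
    case Nil
    then show ?case using subgroup.one_closed[OF derived_is_subgroup] by simp
  next
    case (Cons c cs)
    then have "c \<in> derived G (carrier G)"
      unfolding derived_def by (auto intro: generate.incl)
    then show ?case using Cons subgroup.m_closed[OF derived_is_subgroup] by simp
  qed
  then show "(\<Union>n. comm_prod_le G n) \<subseteq> derived G (carrier G)"
    unfolding comm_prod_le_def by blast
qed

lemma finite_subset_derived_imp_comm_prod_le:
  assumes "finite A" "A \<subseteq> derived G (carrier G)"
  shows "\<exists>N. A \<subseteq> comm_prod_le G N"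
  using assms
proof (induction A rule: finite_induct)
  case empty
  then show ?case by blast
next
  case (insert a A)
  then obtain N n where "A \<subseteq> comm_prod_le G N" "a \<in> comm_prod_le G n"
    using derived_eq_UN_comm_prod_le by blast
  then have "insert a A \<subseteq> comm_prod_le G (max N n)"
    using comm_prod_le_mono[of N "max N n"] comm_prod_le_mono[of n "max N n"] by auto
  then show ?case by blast
qed

lemma finite_cover_imp_bounded_commutator_length:
  assumes "finite F" "F \<subseteq> carrier G"
    and cover: "carrier G = (\<Union>t\<in>F. t <# comm_prod_le G K)"
  shows "\<exists>N. derived G (carrier G) \<subseteq> comm_prod_le G N"
proof -
  let ?D = "derived G (carrier G)"
  have D: "subgroup ?D G" by (simp add: derived_is_subgroup)
  obtain N where N: "F \<inter> ?D \<subseteq> comm_prod_le G N"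
    using finite_subset_derived_imp_comm_prod_le[of "F \<inter> ?D"] \<open>finite F\<close> by blast
  have "?D \<subseteq> comm_prod_le G (N + K)"
  proof
    fix x assume xD: "x \<in> ?D"
    then have "x \<in> carrier G" by (rule subgroup.mem_carrier[OF D])
    then obtain t w where t: "t \<in> F" and w: "w \<in> comm_prod_le G K" and x: "x = t \<otimes> w"
      using cover unfolding l_coset_def by blast
    have wD: "w \<in> ?D" using w derived_eq_UN_comm_prod_le by blast
    have "t \<in> carrier G" "w \<in> carrier G"
      using t \<open>F \<subseteq> carrier G\<close> wD subgroup.mem_carrier[OF D] by auto
    then have "t = x \<otimes> inv w" unfolding x by (simp add: m_assoc)
    then have "t \<in> ?D"
      using xD wD subgroup.m_closed[OF D] subgroup.m_inv_closed[OF D] by simp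
    with t N have "t \<in> comm_prod_le G N" by blast
    then show "x \<in> comm_prod_le G (N + K)"
      unfolding x using w by (rule comm_prod_le_mult)
  qed
  then show ?thesis by blast
qed

end

theorem mainTheorem2:
  fixes G (structure)
  assumes "group G"
    and "finitely_generated_group G"
    and "infinite (carrier G)"
    and "infinite_commutator_width G"
  shows "\<forall>K::nat. \<not> (\<exists>F. finite F \<and> F \<subseteq> carrier G \<and>
            carrier G = (\<Union>t\<in>F. t <# comm_prod_le G K))"
proof (intro allI notI)
  interpret group G by fact
  fix K
  assume "\<exists>F. finite F \<and> F \<subseteq> carrier G \<and> carrier G = (\<Union>t\<in>F. t <# comm_prod_le G K)"
  then obtain N where "derived G (carrier G) \<subseteq> comm_prod_le G N"
    using finite_cover_imp_bounded_commutator_length by blast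
  then show False
    using \<open>infinite_commutator_width G\<close> unfolding infinite_commutator_width_def by blast
qed

end
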